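(* Let $N_{\mathbb{R}}$ be a finite dimensional real vector space with dual $M_{\mathbb{R}}$, let $C\subset N_{\mathbb{R}}$ be a convex set with recession cone $\sigma=\mathrm{rec}(C)$, and let $g\colon C\to\mathbb{R}$ be a closed convex function which is bounded above, with recession function $\mathrm{rec}(g)$. Then: (1) for every $x\in C$, the function $y\mapsto g(x+y)-\mathrm{rec}(g)(y)$ on $\sigma$ is bounded above; (2) if $C$ is closed and $g$ is Lipschitz continuous, then for every $x\in C$ and every $m$ in the interior of $\sigma^\vee$, the function $y\mapsto g(x+y)-\mathrm{rec}(g)(y)+m(y)$ on $\sigma$ is bounded below; (3) if $\sigma$ is full dimensional, then for every $x\in C$ and every $0\neq m\in\sigma^\vee$, the function $y\mapsto g(x+y)-\mathrm{rec}(g)(y)+m(y)$ on $\sigma$ is not bounded above.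
   Context: A convex function $g\colon C\to\mathbb{R}$ is closed if its epigraph $\{(x,y)\in C\times\mathbb{R}:y\ge g(x)\}$ is closed in $N_{\mathbb{R}}\times\mathbb{R}$. The recession cone is $\mathrm{rec}(C)=\{y\in N_{\mathbb{R}}:C+y\subset C\}$. The recession function is $\mathrm{rec}(g)(y)=\lim_{\lambda\to+\infty}(g(x+\lambda y)-g(x))/\lambda$ for $y\in\sigma$, which exists, is independent of $x\in C$, and (for $g$ bounded above) takes finite non-positive values. $\sigma^\vee=\{m\in M_{\mathbb{R}}:m(y)\ge0\ \forall y\in\sigma\}$. *)

theory Defs
  imports "HOL-Analysis.Analysis"
begin

definition rec_cone :: "'a::real_vector set \<Rightarrow> 'a set" where
  "rec_cone C = {y. \<forall>x\<in>C. x + y \<in> C}"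

text \<open>Recession function of g : C -> R, computed from a base point of C
  (the limit is independent of the base point).\<close>
definition rec_fun :: "'a::real_normed_vector set \<Rightarrow> ('a \<Rightarrow> real) \<Rightarrow> 'a \<Rightarrow> real" where
  "rec_fun C g y = (let x = (SOME x. x \<in> C) in
      Lim at_top (\<lambda>l::real. (g (x + l *\<^sub>R y) - g x) / l))"

definition closed_fun_on :: "'a::topological_space set \<Rightarrow> ('a \<Rightarrow> real) \<Rightarrow> bool" where
  "closed_fun_on C g \<longleftrightarrow> closed {(x, t). x \<in> C \<and> g x \<le> t}"

text \<open>Dual cone, with M_R identified with N_R via the inner product.\<close>
definition dual_cone :: "'a::real_inner set \<Rightarrow> 'a set" where
  "dual_cone S = {m. \<forall>y\<in>S. 0 \<le> m \<bullet> y}"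

end

theory Submission
  imports Defs
begin

text \<open>Along a ray \<open>x + t y\<close> with \<open>y \<in> rec(C)\<close> the slopes \<open>(g (x + t y) - g x) / t\<close> of the convex
  function \<open>g\<close> increase with \<open>t\<close>, and they are non-positive because \<open>g\<close> is bounded above. So
  \<open>rec(g)(y)\<close> is their supremum, which gives \<open>g (x + y) \<le> g x + rec(g)(y)\<close> and hence (1);
  closedness of the epigraph makes this supremum independent of \<open>x\<close>, and it is positively
  homogeneous in \<open>y\<close>. For (3), full dimensionality gives \<open>y \<in> \<sigma>\<close> with \<open>m(y) > 0\<close>; as the slopes
  converge to \<open>rec(g)(y)\<close>, the function grows at least like \<open>t m(y) / 2\<close> along \<open>t y\<close>. For (2),
  \<open>m(y) \<ge> r |y|\<close> on \<open>\<sigma>\<close> for some \<open>r > 0\<close>, while the slopes converge to \<open>rec(g)\<close> uniformly in the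
  direction, so \<open>g (x + y) - rec(g)(y) \<ge> g x - r |y|\<close> for large \<open>|y|\<close>.\<close>

lemma rec_cone_ray_in:
  assumes "convex C" "x \<in> C" "y \<in> rec_cone C" "0 \<le> t"
  shows "x + t *\<^sub>R y \<in> C"
proof -
  have integer_steps: "x + real n *\<^sub>R y \<in> C" for n
  proof (induction n)
    case 0
    show ?case using assms(2) by simp
  next
    case (Suc n)
    then have "(x + real n *\<^sub>R y) + y \<in> C" using assms(3) by (auto simp: rec_cone_def)
    then show ?case by (simp add: algebra_simps)
  qed
  obtain n :: nat where n: "t < real n"
    using reals_Archimedean2 by blast
  with assms(4) have "0 < real n" by linarith
  have "(1 - t / n) *\<^sub>R x + (t / n) *\<^sub>R (x + real n *\<^sub>R y) \<in> C"
    using convexD[OF assms(1,2) integer_steps] n \<open>0 < real n\<close> assms(4) by simp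
  moreover have "(1 - t / n) *\<^sub>R x + (t / n) *\<^sub>R (x + real n *\<^sub>R y) = x + t *\<^sub>R y"
    using \<open>0 < real n\<close> by (simp add: algebra_simps)
  ultimately show ?thesis by simp
qed

lemma rec_cone_scaleR:
  assumes "convex C" "y \<in> rec_cone C" "0 \<le> t"
  shows "t *\<^sub>R y \<in> rec_cone C"
  using rec_cone_ray_in[OF assms(1) _ assms(2,3)] by (auto simp: rec_cone_def)

lemma closed_rec_cone:
  fixes C :: "'a::real_normed_vector set"
  assumes "closed C"
  shows "closed (rec_cone C)"
proof -
  have "rec_cone C = (\<Inter>x\<in>C. (\<lambda>y. x + y) -` C)" by (auto simp: rec_cone_def)
  moreover have "closed ((\<lambda>y. x + y) -` C)" for x
    by (intro continuous_closed_vimage continuous_intros assms)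
  ultimately show ?thesis by auto
qed

lemma dual_cone_full_dim_pos:
  fixes S :: "'a::euclidean_space set"
  assumes "aff_dim S = int DIM('a)" "m \<in> dual_cone S" "m \<noteq> 0"
  obtains y where "y \<in> S" "0 < m \<bullet> y"
proof -
  have "\<not> S \<subseteq> {y. m \<bullet> y = 0}"
  proof
    assume "S \<subseteq> {y. m \<bullet> y = 0}"
    then have "aff_dim S \<le> aff_dim {y. m \<bullet> y = 0}" by (rule aff_dim_subset)
    with assms(1,3) show False by simp
  qed
  with assms(2) that show ?thesis by (force simp: dual_cone_def)
qed

lemma interior_dual_cone_norm_le:
  fixes S :: "'a::real_inner set"
  assumes "m \<in> interior (dual_cone S)"
  obtains r where "0 < r" "\<And>y. y \<in> S \<Longrightarrow> r * norm y \<le> m \<bullet> y"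
proof -
  obtain r where r: "0 < r" "cball m r \<subseteq> dual_cone S"
    using assms mem_interior_cball by blast
  have "r * norm y \<le> m \<bullet> y" if "y \<in> S" for y
  proof (cases "y = 0")
    case False
    define z where "z = m - (r / norm y) *\<^sub>R y"
    have "z \<in> cball m r" using False r(1) by (simp add: z_def dist_norm)
    then have "0 \<le> z \<bullet> y" using r(2) that by (auto simp: dual_cone_def)
    also have "z \<bullet> y = m \<bullet> y - r * norm y"
      using False by (simp add: z_def inner_diff_left power2_norm_eq_inner[symmetric] power2_eq_square)
    finally show ?thesis by simp
  qed simp
  with r(1) that show ?thesis by blast
qed

lemma Dini_positive:
  fixes f :: "'b::linorder \<Rightarrow> 'a::topological_space \<Rightarrow> real"
  assumes "compact S"
    and cont: "\<And>t. continuous_on S (f t)"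
    and mono: "\<And>u s t. u \<in> S \<Longrightarrow> s \<le> t \<Longrightarrow> f s u \<le> f t u"
    and pos: "\<And>u. u \<in> S \<Longrightarrow> \<exists>t. 0 < f t u"
  obtains T where "\<And>u. u \<in> S \<Longrightarrow> 0 < f T u"
proof -
  obtain \<tau> where \<tau>: "\<And>u. u \<in> S \<Longrightarrow> 0 < f (\<tau> u) u"
    using pos by metis
  have "\<exists>V. open V \<and> V \<inter> S = f (\<tau> u) -` {0<..} \<inter> S" for u
    using cont[of "\<tau> u"] open_greaterThan unfolding continuous_on_open_invariant by blast
  then obtain V where V: "\<And>u. open (V u)" "\<And>u. V u \<inter> S = f (\<tau> u) -` {0<..} \<inter> S"
    by metis
  have "S \<subseteq> (\<Union>u\<in>S. V u)"
    using V(2) \<tau> by blast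
  then obtain F where F: "F \<subseteq> S" "finite F" "S \<subseteq> (\<Union>u\<in>F. V u)"
    by (rule compactE_image[OF \<open>compact S\<close> V(1)]) auto
  show ?thesis
  proof (cases "F = {}")
    case True
    with F(3) show ?thesis using that by auto
  next
    case False
    show ?thesis
    proof (rule that)
      fix v assume "v \<in> S"
      then obtain u where "u \<in> F" "0 < f (\<tau> u) v"
        using F(3) V(2) by blast
      moreover have "\<tau> u \<le> Max (\<tau> ` F)"
        using F(2) \<open>u \<in> F\<close> by simp
      ultimately show "0 < f (Max (\<tau> ` F)) v"
        using mono[OF \<open>v \<in> S\<close>] by (meson less_le_trans)
    qed
  qed
qed

lemma mono_on_tendsto_SUP_at_top:
  fixes f :: "real \<Rightarrow> real"
  assumes "mono_on {0<..} f" "bdd_above (f ` {0<..})"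
  shows "(f \<longlongrightarrow> (SUP t\<in>{0<..}. f t)) at_top"
proof (rule increasing_tendsto)
  show "\<forall>\<^sub>F t in at_top. f t \<le> (SUP t\<in>{0<..}. f t)"
    using eventually_gt_at_top[of 0]
    by eventually_elim (simp add: cSUP_upper assms(2))
next
  fix a assume "a < (SUP t\<in>{0<..}. f t)"
  then obtain s where s: "0 < s" "a < f s"
    using less_cSUP_iff[OF _ assms(2)] by auto
  show "\<forall>\<^sub>F t in at_top. a < f t"
    using eventually_ge_at_top[of s]
  proof eventually_elim
    case (elim t)
    with s have "f s \<le> f t"
      using mono_onD[OF assms(1)] by simp
    with s show ?case by linarith
  qed
qed

definition ray_slope :: "('a::real_vector \<Rightarrow> real) \<Rightarrow> 'a \<Rightarrow> 'a \<Rightarrow> real \<Rightarrow> real" where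
  "ray_slope g x y t = (g (x + t *\<^sub>R y) - g x) / t"

lemma ray_slope_mono:
  assumes "convex_on C g" "x \<in> C" "y \<in> rec_cone C" "0 < s" "s \<le> t"
  shows "ray_slope g x y s \<le> ray_slope g x y t"
proof -
  have "0 < t" using assms(4,5) by linarith
  define \<theta> where "\<theta> = s / t"
  have \<theta>: "0 \<le> \<theta>" "\<theta> \<le> 1" "\<theta> * t = s"
    using assms(4,5) \<open>0 < t\<close> by (auto simp: \<theta>_def field_simps)
  have "x + t *\<^sub>R y \<in> C"
    using rec_cone_ray_in[OF convex_on_imp_convex[OF assms(1)] assms(2,3)] \<open>0 < t\<close> by simp
  moreover have "(1 - \<theta>) *\<^sub>R x + \<theta> *\<^sub>R (x + t *\<^sub>R y) = x + s *\<^sub>R y"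
    by (simp add: algebra_simps flip: \<theta>(3))
  ultimately have "g (x + s *\<^sub>R y) \<le> (1 - \<theta>) * g x + \<theta> * g (x + t *\<^sub>R y)"
    using convex_onD[OF assms(1) \<theta>(1,2) assms(2)] by metis
  then have "g (x + s *\<^sub>R y) - g x \<le> \<theta> * (g (x + t *\<^sub>R y) - g x)"
    by (simp add: algebra_simps)
  then show ?thesis
    using assms(4) \<open>0 < t\<close> by (simp add: ray_slope_def \<theta>_def field_simps)
qed

text \<open>Convexity on the segment from \<open>x'\<close> to the far point \<open>x + (t / e) y\<close> bounds \<open>g\<close> at
  \<open>(1 - e) x' + e x + t y\<close>; letting \<open>e \<rightarrow> 0\<close>, closedness of the epigraph transfers the bound
  to \<open>x' + t y\<close>.\<close>
lemma ray_slope_le_at_other_base: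
  fixes C :: "'a::real_normed_vector set"
  assumes "convex_on C g" "closed_fun_on C g" "x \<in> C" "x' \<in> C" "y \<in> rec_cone C"
    and bound: "\<And>s. 0 < s \<Longrightarrow> ray_slope g x y s \<le> c"
    and "0 < t"
  shows "ray_slope g x' y t \<le> c"
proof -
  have "convex C"
    using convex_on_imp_convex[OF assms(1)] .
  let ?E = "{(z, v). z \<in> C \<and> g z \<le> v}"
  let ?p = "\<lambda>e. (1 - e) *\<^sub>R x' + e *\<^sub>R x + t *\<^sub>R y"
  let ?v = "\<lambda>e. (1 - e) * g x' + e * g x + t * c"
  have "(?p e, ?v e) \<in> ?E" if e: "0 < e" "e < 1" for e
  proof -
    define far where "far = x + (t / e) *\<^sub>R y"
    have far: "far \<in> C"
      unfolding far_def using rec_cone_ray_in[OF \<open>convex C\<close> assms(3,5)] e assms(7) by simp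
    have p: "?p e = (1 - e) *\<^sub>R x' + e *\<^sub>R far"
      using e by (simp add: far_def algebra_simps)
    have "?p e \<in> C"
      unfolding p using convexD[OF \<open>convex C\<close> assms(4) far] e by simp
    moreover have "g (?p e) \<le> (1 - e) * g x' + e * g far"
      unfolding p using convex_onD[OF assms(1)] e assms(4) far by simp
    moreover have "g far \<le> g x + (t / e) * c"
      using bound[of "t / e"] e assms(7) by (simp add: ray_slope_def far_def field_simps)
    then have "e * g far \<le> e * g x + t * c"
      using e by (simp add: field_simps)
    ultimately show ?thesis by simp
  qed
  then have "\<forall>\<^sub>F e in at_right 0. (?p e, ?v e) \<in> ?E"
    unfolding eventually_at_right_field by (intro exI[of _ 1]) auto
  moreover have "((\<lambda>e. (?p e, ?v e)) \<longlongrightarrow> (?p 0, ?v 0)) (at_right 0)"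
    by (intro tendsto_intros)
  ultimately have "(?p 0, ?v 0) \<in> ?E"
    using assms(2) unfolding closed_fun_on_def by (intro Lim_in_closed_set) auto
  with assms(7) show ?thesis
    by (simp add: ray_slope_def field_simps)
qed

locale bounded_above_closed_convex_fun =
  fixes C :: "'a::euclidean_space set" and g :: "'a \<Rightarrow> real"
  assumes convex_on_g: "convex_on C g"
    and closed_g: "closed_fun_on C g"
    and bdd_above_g: "bdd_above (g ` C)"
begin

lemma convex_C: "convex C"
  using convex_on_imp_convex[OF convex_on_g] .

lemma ray_slope_nonpos:
  assumes "x \<in> C" "y \<in> rec_cone C" "0 < t"
  shows "ray_slope g x y t \<le> 0"
proof -
  obtain B where B: "\<And>z. z \<in> C \<Longrightarrow> g z \<le> B"
    using bdd_above_g by (auto simp: bdd_above_def)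
  have "((\<lambda>s. (B - g x) / s) \<longlongrightarrow> 0) at_top"
    by (rule real_tendsto_divide_at_top[OF tendsto_const filterlim_ident])
  moreover have "\<forall>\<^sub>F s in at_top. ray_slope g x y t \<le> (B - g x) / s"
    using eventually_ge_at_top[of t]
  proof eventually_elim
    case (elim s)
    have "ray_slope g x y t \<le> ray_slope g x y s"
      using ray_slope_mono[OF convex_on_g assms elim] .
    also have "\<dots> \<le> (B - g x) / s"
      using B[OF rec_cone_ray_in[OF convex_C assms(1,2)]] elim assms(3)
      by (simp add: ray_slope_def divide_right_mono)
    finally show ?case .
  qed
  ultimately show ?thesis
    by (rule tendsto_le[OF trivial_limit_at_top_linorder _ tendsto_const])
qed

lemma bdd_above_ray_slope:
  "x \<in> C \<Longrightarrow> y \<in> rec_cone C \<Longrightarrow> bdd_above (ray_slope g x y ` {0<..})"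
  using ray_slope_nonpos by (intro bdd_aboveI2[where M = 0]) auto

lemma tendsto_ray_slope_SUP:
  assumes "x \<in> C" "y \<in> rec_cone C"
  shows "(ray_slope g x y \<longlongrightarrow> (SUP t\<in>{0<..}. ray_slope g x y t)) at_top"
proof (rule mono_on_tendsto_SUP_at_top)
  show "mono_on {0<..} (ray_slope g x y)"
    using ray_slope_mono[OF convex_on_g assms] by (intro mono_onI) simp
qed (rule bdd_above_ray_slope[OF assms])

lemma SUP_ray_slope_base_indep:
  assumes "x \<in> C" "x' \<in> C" "y \<in> rec_cone C"
  shows "(SUP t\<in>{0<..}. ray_slope g x' y t) = (SUP t\<in>{0<..}. ray_slope g x y t)"
proof -
  have le: "(SUP t\<in>{0<..}. ray_slope g x' y t) \<le> (SUP t\<in>{0<..}. ray_slope g x y t)"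
    if "x \<in> C" "x' \<in> C" for x x'
  proof (rule cSUP_least)
    fix t :: real assume "t \<in> {0<..}"
    have "ray_slope g x y s \<le> (SUP t\<in>{0<..}. ray_slope g x y t)" if "0 < s" for s
      using that by (intro cSUP_upper bdd_above_ray_slope \<open>x \<in> C\<close> assms(3)) simp
    with \<open>t \<in> {0<..}\<close> show "ray_slope g x' y t \<le> (SUP t\<in>{0<..}. ray_slope g x y t)"
      using ray_slope_le_at_other_base[OF convex_on_g closed_g that assms(3)] by simp
  qed simp
  show ?thesis
    using le[OF assms(1,2)] le[OF assms(2,1)] by simp
qed

lemma rec_fun_eq_SUP:
  assumes "x \<in> C" "y \<in> rec_cone C"
  shows "rec_fun C g y = (SUP t\<in>{0<..}. ray_slope g x y t)"
proof -
  define x0 where "x0 = (SOME x. x \<in> C)"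
  have "x0 \<in> C"
    unfolding x0_def using assms(1) by (rule someI)
  have "rec_fun C g y = Lim at_top (ray_slope g x0 y)"
    unfolding rec_fun_def ray_slope_def x0_def Let_def ..
  also have "\<dots> = (SUP t\<in>{0<..}. ray_slope g x0 y t)"
    using tendsto_ray_slope_SUP[OF \<open>x0 \<in> C\<close> assms(2)] by (intro tendsto_Lim) auto
  finally show ?thesis
    using SUP_ray_slope_base_indep[OF assms(1) \<open>x0 \<in> C\<close> assms(2)] by simp
qed

lemma tendsto_ray_slope_rec_fun:
  "x \<in> C \<Longrightarrow> y \<in> rec_cone C \<Longrightarrow> (ray_slope g x y \<longlongrightarrow> rec_fun C g y) at_top"
  using tendsto_ray_slope_SUP rec_fun_eq_SUP by simp

lemma ray_slope_le_rec_fun: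
  "x \<in> C \<Longrightarrow> y \<in> rec_cone C \<Longrightarrow> 0 < t \<Longrightarrow> ray_slope g x y t \<le> rec_fun C g y"
  using rec_fun_eq_SUP by (auto intro: cSUP_upper bdd_above_ray_slope)

lemma rec_fun_nonpos:
  "x \<in> C \<Longrightarrow> y \<in> rec_cone C \<Longrightarrow> rec_fun C g y \<le> 0"
  using rec_fun_eq_SUP ray_slope_nonpos by (auto intro: cSUP_least)

lemma le_add_rec_fun:
  "x \<in> C \<Longrightarrow> y \<in> rec_cone C \<Longrightarrow> g (x + y) \<le> g x + rec_fun C g y"
  using ray_slope_le_rec_fun[of x y 1] by (simp add: ray_slope_def)

lemma rec_fun_scaleR:
  assumes "x \<in> C" "y \<in> rec_cone C" "0 < t"
  shows "rec_fun C g (t *\<^sub>R y) = t * rec_fun C g y"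
proof -
  have "filterlim (\<lambda>s. t * s) at_top at_top"
    using filterlim_tendsto_pos_mult_at_top[OF tendsto_const assms(3) filterlim_ident] .
  then have "((\<lambda>s. t * ray_slope g x y (t * s)) \<longlongrightarrow> t * rec_fun C g y) at_top"
    by (intro tendsto_intros filterlim_compose[OF tendsto_ray_slope_rec_fun[OF assms(1,2)]])
  moreover have "\<forall>\<^sub>F s in at_top. t * ray_slope g x y (t * s) = ray_slope g x (t *\<^sub>R y) s"
    using eventually_gt_at_top[of 0]
    by eventually_elim (use assms(3) in \<open>simp add: ray_slope_def field_simps\<close>)
  ultimately have "(ray_slope g x (t *\<^sub>R y) \<longlongrightarrow> t * rec_fun C g y) at_top"
    by (rule Lim_transform_eventually)
  moreover have "(ray_slope g x (t *\<^sub>R y) \<longlongrightarrow> rec_fun C g (t *\<^sub>R y)) at_top"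
    using tendsto_ray_slope_rec_fun[OF assms(1) rec_cone_scaleR[OF convex_C assms(2)]] assms(3) by simp
  ultimately show ?thesis
    using tendsto_unique by force
qed

lemma lipschitz_on_rec_fun:
  assumes "x \<in> C" "K-lipschitz_on C g"
  shows "K-lipschitz_on (rec_cone C) (rec_fun C g)"
proof -
  have one_sided: "rec_fun C g u \<le> rec_fun C g v + K * dist u v"
    if "u \<in> rec_cone C" "v \<in> rec_cone C" for u v
    unfolding rec_fun_eq_SUP[OF assms(1) that(1)]
  proof (rule cSUP_least)
    fix t :: real assume "t \<in> {0<..}"
    then have "0 < t" by simp
    have "g (x + t *\<^sub>R u) - g (x + t *\<^sub>R v) \<le> K * dist (x + t *\<^sub>R u) (x + t *\<^sub>R v)"
      using lipschitz_onD[OF assms(2) rec_cone_ray_in[OF convex_C assms(1) that(1)]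
          rec_cone_ray_in[OF convex_C assms(1) that(2)], of t t] \<open>0 < t\<close>
      by (simp add: dist_real_def)
    also have "\<dots> = t * (K * dist u v)"
      using \<open>0 < t\<close> by (simp add: dist_norm algebra_simps flip: scaleR_diff_right)
    finally have "ray_slope g x u t \<le> ray_slope g x v t + K * dist u v"
      using \<open>0 < t\<close> by (simp add: ray_slope_def field_simps)
    then show "ray_slope g x u t \<le> rec_fun C g v + K * dist u v"
      using ray_slope_le_rec_fun[OF assms(1) that(2) \<open>0 < t\<close>] by simp
  qed simp
  show ?thesis
  proof (rule lipschitz_onI)
    fix u v assume "u \<in> rec_cone C" "v \<in> rec_cone C"
    then show "dist (rec_fun C g u) (rec_fun C g v) \<le> K * dist u v"
      using one_sided[of u v] one_sided[of v u] by (simp add: dist_real_def dist_commute)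
  qed (rule lipschitz_on_nonneg[OF assms(2)])
qed

lemma bdd_above_sub_rec_fun:
  "x \<in> C \<Longrightarrow> bdd_above ((\<lambda>y. g (x + y) - rec_fun C g y) ` rec_cone C)"
  using le_add_rec_fun by (intro bdd_aboveI2[where M = "g x"]) force

text \<open>Lipschitz continuity makes the slopes continuous in the direction, so by Dini's theorem
  they converge to the recession function uniformly on the unit sphere of the recession cone.\<close>
lemma rec_fun_approx_uniform:
  assumes "closed C" "K-lipschitz_on C g" "x \<in> C" "0 < \<epsilon>"
  obtains T where "\<And>y. y \<in> rec_cone C \<Longrightarrow> T \<le> norm y \<Longrightarrow>
    rec_fun C g y - \<epsilon> * norm y \<le> g (x + y) - g x"
proof -
  let ?S = "rec_cone C \<inter> sphere 0 1"
  define f where "f n u = ray_slope g x u (Suc n) - rec_fun C g u + \<epsilon>" for n :: nat and u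
  have compact: "compact ?S"
    by (intro closed_Int_compact closed_rec_cone assms(1) compact_sphere)
  have cont: "continuous_on ?S (f n)" for n
  proof -
    have "continuous_on ?S (\<lambda>u. g (x + real (Suc n) *\<^sub>R u))"
      by (rule continuous_on_compose2[OF lipschitz_on_continuous_on[OF assms(2)]])
        (auto intro!: continuous_intros rec_cone_ray_in[OF convex_C assms(3)])
    moreover have "continuous_on ?S (rec_fun C g)"
      using lipschitz_on_continuous_on[OF lipschitz_on_rec_fun[OF assms(3,2)]]
      by (rule continuous_on_subset) auto
    ultimately show ?thesis
      unfolding f_def ray_slope_def by (intro continuous_intros) auto
  qed
  have mono: "f m u \<le> f n u" if "u \<in> ?S" "m \<le> n" for u m n
    using ray_slope_mono[OF convex_on_g assms(3), of u "Suc m" "Suc n"] that by (simp add: f_def)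
  have pos: "\<exists>n. 0 < f n u" if "u \<in> ?S" for u
  proof -
    have "\<forall>\<^sub>F t in at_top. rec_fun C g u - \<epsilon> < ray_slope g x u t"
      using tendsto_ray_slope_rec_fun[OF assms(3)] that assms(4) by (intro order_tendstoD) auto
    then obtain t0 where t0: "\<And>t. t0 \<le> t \<Longrightarrow> rec_fun C g u - \<epsilon> < ray_slope g x u t"
      by (auto simp: eventually_at_top_linorder)
    obtain n :: nat where "t0 \<le> real n"
      using real_arch_simple by blast
    then have "rec_fun C g u - \<epsilon> < ray_slope g x u (Suc n)"
      by (intro t0) simp
    then show ?thesis
      by (intro exI[of _ n]) (simp add: f_def)
  qed
  obtain N where N: "\<And>u. u \<in> ?S \<Longrightarrow> 0 < f N u"
    using Dini_positive[OF compact cont mono pos] by blast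
  show ?thesis
  proof (rule that[of "Suc N"])
    fix y assume y: "y \<in> rec_cone C" "real (Suc N) \<le> norm y"
    define s where "s = norm y"
    define u where "u = (1 / s) *\<^sub>R y"
    have "real (Suc N) \<le> s"
      using y(2) by (simp add: s_def)
    then have "0 < s"
      by (metis of_nat_0_less_iff order.strict_trans2 zero_less_Suc)
    have "u \<in> ?S"
      using rec_cone_scaleR[OF convex_C y(1), of "1 / s"] \<open>0 < s\<close> by (simp add: u_def s_def)
    have yu: "s *\<^sub>R u = y"
      using \<open>0 < s\<close> by (simp add: u_def)
    have "rec_fun C g u - \<epsilon> < ray_slope g x u (Suc N)"
      using N[OF \<open>u \<in> ?S\<close>] by (simp add: f_def)
    also have "\<dots> \<le> ray_slope g x u s"
      using ray_slope_mono[OF convex_on_g assms(3)] \<open>u \<in> ?S\<close> \<open>real (Suc N) \<le> s\<close> by simp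
    also have "\<dots> = (g (x + y) - g x) / s"
      by (simp add: ray_slope_def yu)
    finally have "s * rec_fun C g u - \<epsilon> * s \<le> g (x + y) - g x"
      using \<open>0 < s\<close> by (simp add: field_simps)
    moreover have "rec_fun C g y = s * rec_fun C g u"
      using rec_fun_scaleR[OF assms(3) _ \<open>0 < s\<close>, of u] \<open>u \<in> ?S\<close> yu by simp
    ultimately show "rec_fun C g y - \<epsilon> * norm y \<le> g (x + y) - g x"
      by (simp add: s_def)
  qed
qed

lemma bdd_below_sub_rec_fun_add_inner:
  assumes "closed C" "K-lipschitz_on C g" "x \<in> C" "m \<in> interior (dual_cone (rec_cone C))"
  shows "bdd_below ((\<lambda>y. g (x + y) - rec_fun C g y + m \<bullet> y) ` rec_cone C)"
proof -
  obtain r where r: "0 < r" "\<And>y. y \<in> rec_cone C \<Longrightarrow> r * norm y \<le> m \<bullet> y"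
    using interior_dual_cone_norm_le[OF assms(4)] by blast
  obtain T where T: "\<And>y. y \<in> rec_cone C \<Longrightarrow> T \<le> norm y \<Longrightarrow>
      rec_fun C g y - r * norm y \<le> g (x + y) - g x"
    using rec_fun_approx_uniform[OF assms(1-3) r(1)] by blast
  have "0 \<le> K" using lipschitz_on_nonneg[OF assms(2)] .
  have "g x - K * \<bar>T\<bar> \<le> g (x + y) - rec_fun C g y + m \<bullet> y" if y: "y \<in> rec_cone C" for y
  proof (cases "T \<le> norm y")
    case True
    have "0 \<le> K * \<bar>T\<bar>"
      using \<open>0 \<le> K\<close> by simp
    then show ?thesis
      using T[OF y True] r(2)[OF y] by linarith
  next
    case False
    have "x + y \<in> C" using y assms(3) by (simp add: rec_cone_def)
    then have "g x - K * norm y \<le> g (x + y)"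
      using lipschitz_onD[OF assms(2) _ assms(3), of "x + y"] by (simp add: dist_real_def dist_norm)
    moreover have "K * norm y \<le> K * \<bar>T\<bar>"
      using False \<open>0 \<le> K\<close> by (intro mult_left_mono) auto
    moreover have "0 \<le> m \<bullet> y"
      using r(2)[OF y] r(1) by (meson mult_nonneg_nonneg norm_ge_zero less_imp_le order_trans)
    ultimately show ?thesis
      using rec_fun_nonpos[OF assms(3) y] by linarith
  qed
  then show ?thesis by (intro bdd_belowI2)
qed

lemma filterlim_sub_rec_fun_add_inner_at_top:
  assumes "x \<in> C" "y \<in> rec_cone C" "0 < m \<bullet> y"
  shows "filterlim (\<lambda>t. g (x + t *\<^sub>R y) - rec_fun C g (t *\<^sub>R y) + m \<bullet> (t *\<^sub>R y)) at_top at_top"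
proof (rule filterlim_at_top_mono)
  show "filterlim (\<lambda>t. g x + (m \<bullet> y / 2) * t) at_top at_top"
    using assms(3)
    by (intro filterlim_tendsto_add_at_top[OF tendsto_const]
        filterlim_tendsto_pos_mult_at_top[OF tendsto_const _ filterlim_ident]) simp
  have "\<forall>\<^sub>F t in at_top. rec_fun C g y - m \<bullet> y / 2 < ray_slope g x y t"
    using tendsto_ray_slope_rec_fun[OF assms(1,2)] assms(3) by (intro order_tendstoD) auto
  then show "\<forall>\<^sub>F t in at_top.
      g x + (m \<bullet> y / 2) * t \<le> g (x + t *\<^sub>R y) - rec_fun C g (t *\<^sub>R y) + m \<bullet> (t *\<^sub>R y)"
    using eventually_gt_at_top[of 0]
  proof eventually_elim
    case (elim t)
    then have "t * (rec_fun C g y - m \<bullet> y / 2) \<le> g (x + t *\<^sub>R y) - g x"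
      using mult_left_mono[OF less_imp_le[OF elim(1)], of t] by (simp add: ray_slope_def)
    moreover have "rec_fun C g (t *\<^sub>R y) = t * rec_fun C g y"
      using rec_fun_scaleR[OF assms(1,2) elim(2)] .
    ultimately show ?case
      by (simp add: algebra_simps)
  qed
qed

lemma not_bdd_above_sub_rec_fun_add_inner:
  assumes "aff_dim (rec_cone C) = int DIM('a)" "x \<in> C" "m \<in> dual_cone (rec_cone C)" "m \<noteq> 0"
  shows "\<not> bdd_above ((\<lambda>y. g (x + y) - rec_fun C g y + m \<bullet> y) ` rec_cone C)"
proof
  assume "bdd_above ((\<lambda>y. g (x + y) - rec_fun C g y + m \<bullet> y) ` rec_cone C)"
  then obtain B where B: "\<And>y. y \<in> rec_cone C \<Longrightarrow> g (x + y) - rec_fun C g y + m \<bullet> y \<le> B"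
    by (auto simp: bdd_above_def)
  obtain y where y: "y \<in> rec_cone C" "0 < m \<bullet> y"
    using dual_cone_full_dim_pos[OF assms(1,3,4)] .
  have "\<forall>\<^sub>F t in at_top. B < g (x + t *\<^sub>R y) - rec_fun C g (t *\<^sub>R y) + m \<bullet> (t *\<^sub>R y)"
    using filterlim_sub_rec_fun_add_inner_at_top[OF assms(2) y] by (simp add: filterlim_at_top_dense)
  then have "\<forall>\<^sub>F t in at_top. 0 \<le> t \<and>
      B < g (x + t *\<^sub>R y) - rec_fun C g (t *\<^sub>R y) + m \<bullet> (t *\<^sub>R y)"
    by (intro eventually_conj eventually_ge_at_top)
  then obtain t where "0 \<le> t" "B < g (x + t *\<^sub>R y) - rec_fun C g (t *\<^sub>R y) + m \<bullet> (t *\<^sub>R y)"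
    by (auto simp: eventually_at_top_linorder)
  with B[OF rec_cone_scaleR[OF convex_C y(1) \<open>0 \<le> t\<close>]] show False
    by simp
qed

end

theorem lemma2p27:
  fixes C :: "'a::euclidean_space set" and g :: "'a \<Rightarrow> real"
  assumes "convex C"
    and "convex_on C g"
    and "closed_fun_on C g"
    and "\<exists>B. \<forall>x\<in>C. g x \<le> B"
  shows "(\<forall>x\<in>C. \<exists>B. \<forall>y\<in>rec_cone C. g (x + y) - rec_fun C g y \<le> B)
    \<and> ((closed C \<and> (\<exists>L. L-lipschitz_on C g)) \<longrightarrow>
         (\<forall>x\<in>C. \<forall>m\<in>interior (dual_cone (rec_cone C)).
            \<exists>B. \<forall>y\<in>rec_cone C. B \<le> g (x + y) - rec_fun C g y + m \<bullet> y))
    \<and> (aff_dim (rec_cone C) = int DIM('a) \<longrightarrow>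
         (\<forall>x\<in>C. \<forall>m\<in>dual_cone (rec_cone C). m \<noteq> 0 \<longrightarrow>
            \<not> (\<exists>B. \<forall>y\<in>rec_cone C. g (x + y) - rec_fun C g y + m \<bullet> y \<le> B)))"
proof -
  from assms(4) have "bdd_above (g ` C)"
    by (auto simp: bdd_above_def)
  with assms(2,3) interpret bounded_above_closed_convex_fun C g
    by unfold_locales
  show ?thesis
    using bdd_above_sub_rec_fun bdd_below_sub_rec_fun_add_inner not_bdd_above_sub_rec_fun_add_inner
    by (auto simp: bdd_above_def bdd_below_def)
qed

end
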